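(* Let $\lambda\in\mathbb C$ and put $(\lambda_i,\beta_i)=\Phi^i(\lambda,0)$ for $i\ge 0$ (so $\lambda_0=\lambda$, $\beta_0=0$). Let $n\ge 0$ and suppose that the weights $(\lambda_0,\beta_0),\dots,(\lambda_n,\beta_n)$ are pairwise distinct, $\beta_i\neq 0$ for $1\le i\le n$, and $\beta_{n+1}=0$. Let $F_{\mathrm{hw}}(\lambda)$ be the $(n+1)$-dimensional $L$-module with basis $v_0,\dots,v_n$ and action $hv_i=\lambda_i v_i$ $(0\le i\le n)$; $dv_0=0$, $dv_i=\beta_i v_{i-1}$ $(1\le i\le n)$; $uv_n=0$, $uv_i=v_{i+1}$ $(0\le i\le n-1)$ (this is a simple $L$-module). Let $J_\lambda=\{f(h,ud)\in L_0: f\in\mathbb C[x,y],\ f(\lambda_i,\beta_i)=0 \text{ for } 0\le i\le n\}$. Then the annihilator of $F_{\mathrm{hw}}(\lambda)$ in $L$ is the two-sided ideal $\langle u^{n+1}, d^{n+1}, J_\lambda\rangle$.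
   Context: Let $r,s,\gamma\in\mathbb C$ with $rs\neq 0$ and $\phi\in\mathbb C[x]$. The generalized down-up algebra $L=L(\phi,r,s,\gamma)$ is the associative $\mathbb C$-algebra generated by $u,d,h$ subject to $hu-ruh=\gamma u$, $dh-rhd=\gamma d$, $du-sud=\phi(h)$; it is a noetherian domain with $\mathbb C$-basis $\{u^ih^jd^k: i,j,k\ge 0\}$. $L$ is $\mathbb Z$-graded by $\deg u=1$, $\deg d=-1$, $\deg h=0$; $L_i$ denotes the degree-$i$ component, and $L_0$ is the polynomial algebra $\mathbb C[h,ud]$ in the commuting elements $h$ and $ud$. $\langle a_1,\dots,a_k\rangle$ denotes the two-sided ideal generated by the listed elements (or sets). The map $\Phi:\mathbb C^2\to\mathbb C^2$ is $\Phi(\lambda,\beta)=(r\lambda+\gamma,\ s\beta+\phi(\lambda))$. *)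

theory Defs
  imports Complex_Main "HOL-Computational_Algebra.Polynomial"
begin

text \<open>The generalized down-up algebra L is presented as the free associative
algebra on three generators modulo the defining relations.  Elements of the
free algebra are finitely supported coefficient functions on words.\<close>

datatype gen = U | D | H

type_synonym fa = "gen list \<Rightarrow> complex"

definition fa_finite :: "fa \<Rightarrow> bool" where
  "fa_finite x \<longleftrightarrow> finite {w. x w \<noteq> 0}"

definition fa_zero :: fa where
  "fa_zero = (\<lambda>_. 0)"

definition fa_add :: "fa \<Rightarrow> fa \<Rightarrow> fa" where
  "fa_add x y = (\<lambda>w. x w + y w)"

definition fa_smult :: "complex \<Rightarrow> fa \<Rightarrow> fa" where
  "fa_smult c x = (\<lambda>w. c * x w)"

definition fa_mul :: "fa \<Rightarrow> fa \<Rightarrow> fa" where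
  "fa_mul x y = (\<lambda>w. \<Sum>i\<le>length w. x (take i w) * y (drop i w))"

definition fa_word :: "gen list \<Rightarrow> fa" where
  "fa_word v = (\<lambda>w. if w = v then 1 else 0)"

definition fa_poly_h :: "complex poly \<Rightarrow> fa" where
  "fa_poly_h p = (\<lambda>w. if w = replicate (length w) H then coeff p (length w) else 0)"

text \<open>Bivariate polynomials f in C[x,y] are represented as complex poly poly:
the outer variable is y, the inner one is x, so f = sum_k (coeff f k)(x) y^k.
fa_biv f is the element f(h, ud) = sum_{j,k} c_{jk} h^j (ud)^k.\<close>
definition fa_biv :: "complex poly poly \<Rightarrow> fa" where
  "fa_biv f = (\<lambda>w. \<Sum>k\<le>degree f. \<Sum>j\<le>degree (coeff f k).
      if w = replicate j H @ concat (replicate k [U, D]) then coeff (coeff f k) j else 0)"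

definition poly2 :: "complex poly poly \<Rightarrow> complex \<Rightarrow> complex \<Rightarrow> complex" where
  "poly2 f a b = poly (poly f [:b:]) a"

inductive_set fa_ideal :: "fa set \<Rightarrow> fa set" for G :: "fa set" where
  zero: "fa_zero \<in> fa_ideal G"
| gen: "g \<in> G \<Longrightarrow> fa_finite a \<Longrightarrow> fa_finite b \<Longrightarrow> fa_mul (fa_mul a g) b \<in> fa_ideal G"
| add: "x \<in> fa_ideal G \<Longrightarrow> y \<in> fa_ideal G \<Longrightarrow> fa_add x y \<in> fa_ideal G"

definition dua_rels :: "complex \<Rightarrow> complex \<Rightarrow> complex \<Rightarrow> complex poly \<Rightarrow> fa set" where
  "dua_rels r s \<gamma> \<phi> =
    { fa_add (fa_word [H,U]) (fa_add (fa_smult (-r) (fa_word [U,H])) (fa_smult (-\<gamma>) (fa_word [U]))),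
      fa_add (fa_word [D,H]) (fa_add (fa_smult (-r) (fa_word [H,D])) (fa_smult (-\<gamma>) (fa_word [D]))),
      fa_add (fa_word [D,U]) (fa_add (fa_smult (-s) (fa_word [U,D])) (fa_smult (-1) (fa_poly_h \<phi>))) }"

definition Phi :: "complex \<Rightarrow> complex \<Rightarrow> complex \<Rightarrow> complex poly \<Rightarrow> complex \<times> complex \<Rightarrow> complex \<times> complex" where
  "Phi r s \<gamma> \<phi> = (\<lambda>(l, b). (r * l + \<gamma>, s * b + poly \<phi> l))"

definition wt :: "complex \<Rightarrow> complex \<Rightarrow> complex \<Rightarrow> complex poly \<Rightarrow> complex \<Rightarrow> nat \<Rightarrow> complex \<times> complex" where
  "wt r s \<gamma> \<phi> lam i = (Phi r s \<gamma> \<phi> ^^ i) (lam, 0)"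

text \<open>Vectors of F_hw(lambda) are coefficient functions on the basis v_0..v_n
(coefficients at indices > n are zero).\<close>
definition act_gen :: "complex \<Rightarrow> complex \<Rightarrow> complex \<Rightarrow> complex poly \<Rightarrow> complex \<Rightarrow> nat \<Rightarrow> gen
    \<Rightarrow> (nat \<Rightarrow> complex) \<Rightarrow> (nat \<Rightarrow> complex)" where
  "act_gen r s \<gamma> \<phi> lam n g v = (case g of
      U \<Rightarrow> (\<lambda>j. if 1 \<le> j \<and> j \<le> n then v (j - 1) else 0)
    | D \<Rightarrow> (\<lambda>j. if j < n then snd (wt r s \<gamma> \<phi> lam (Suc j)) * v (Suc j) else 0)
    | H \<Rightarrow> (\<lambda>j. if j \<le> n then fst (wt r s \<gamma> \<phi> lam j) * v j else 0))"

definition act_word :: "complex \<Rightarrow> complex \<Rightarrow> complex \<Rightarrow> complex poly \<Rightarrow> complex \<Rightarrow> nat \<Rightarrow> gen list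
    \<Rightarrow> (nat \<Rightarrow> complex) \<Rightarrow> (nat \<Rightarrow> complex)" where
  "act_word r s \<gamma> \<phi> lam n w = foldr (\<lambda>g f. act_gen r s \<gamma> \<phi> lam n g \<circ> f) w id"

definition act :: "complex \<Rightarrow> complex \<Rightarrow> complex \<Rightarrow> complex poly \<Rightarrow> complex \<Rightarrow> nat \<Rightarrow> fa
    \<Rightarrow> (nat \<Rightarrow> complex) \<Rightarrow> (nat \<Rightarrow> complex)" where
  "act r s \<gamma> \<phi> lam n x v = (\<lambda>j. \<Sum>w\<in>{w. x w \<noteq> 0}. x w * act_word r s \<gamma> \<phi> lam n w v j)"

text \<open>Preimage in the free algebra of the annihilator of F_hw(lambda) in L.\<close>
definition ann_Fhw :: "complex \<Rightarrow> complex \<Rightarrow> complex \<Rightarrow> complex poly \<Rightarrow> complex \<Rightarrow> nat \<Rightarrow> fa set" where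
  "ann_Fhw r s \<gamma> \<phi> lam n = {x. fa_finite x \<and>
      (\<forall>v. (\<forall>j>n. v j = 0) \<longrightarrow> act r s \<gamma> \<phi> lam n x v = (\<lambda>_. 0))}"

end

(*
  Let I be the two-sided ideal of the free algebra generated by the defining relations
  of L, u^(n+1), d^(n+1) and the elements f(h,ud) with f vanishing at the n+1 weights.

  (1) I annihilates F_hw(lambda): each generator acts as zero (for the relation
      du - sud - phi(h) this uses beta_(n+1) = 0), and the action is multiplicative.
  (2) Modulo I, every element is a linear combination of the normal monomials
      u^a E d^b (a, b <= n), where E = p0(h,ud) and p0 interpolates the indicator
      of the weight (lambda_0, beta_0).  Two facts drive this:
      - "twisting": d f(h,ud) = f'(h,ud) d and f(h,ud) u = u f'(h,ud) modulo I, where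
        f'(x,y) = f(r x + gamma, s y + phi(x)), so every word is congruent to a sum of
        u^a f(h,ud) d^b;
      - "decomposition": f(h,ud) = c E + u g(h,ud) d modulo I, by Lagrange
        interpolation at the weights, using beta_i <> 0 for 1 <= i <= n.
  (3) u^a E d^b maps v_b' to a nonzero multiple of v_a if b = b' and to 0 otherwise,
      so a normal form that annihilates F_hw(lambda) has all coefficients zero.
  Hence ann = I.
*)
theory Submission
  imports Defs
begin

section \<open>The free algebra as a ring\<close>

lemma fa_mul_assoc: "fa_mul (fa_mul x y) z = fa_mul x (fa_mul y z)"
proof (rule ext)
  fix w :: "gen list"
  define N where "N = length w"
  define T where "T j k = x (take j w) * y (take k (drop j w)) * z (drop (j+k) w)" for j k
  have L: "fa_mul (fa_mul x y) z w = (\<Sum>i\<le>N. \<Sum>j\<le>i. T j (i - j))"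
    unfolding fa_mul_def N_def T_def
    by (rule sum.cong[OF refl]) (auto simp: sum_distrib_right drop_take min_def intro!: sum.cong)
  have R: "fa_mul x (fa_mul y z) w = (\<Sum>j\<le>N. \<Sum>k\<le>N - j. T j k)"
    unfolding fa_mul_def N_def T_def
    by (rule sum.cong[OF refl]) (auto simp: sum_distrib_left mult.assoc add.commute intro!: sum.cong)
  have "(\<Sum>j\<le>N. \<Sum>k\<le>N - j. T j k) = (\<Sum>(j,k)\<in>{(j,k). j + k \<le> N}. T j k)"
  proof -
    have e: "{(j,k). j + k \<le> N} = Sigma {..N} (\<lambda>j. {..N - j})" by auto
    show ?thesis unfolding e by (subst sum.Sigma) auto
  qed
  also have "\<dots> = (\<Sum>i\<le>N. \<Sum>j\<le>i. T j (i - j))" by (rule sum.triangle_reindex_eq)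
  finally show "fa_mul (fa_mul x y) z w = fa_mul x (fa_mul y z) w" using L R by simp
qed

lemma fa_mul_add_left: "fa_mul (fa_add x y) z = fa_add (fa_mul x z) (fa_mul y z)"
  by (auto simp: fa_mul_def fa_add_def distrib_right sum.distrib)

lemma fa_mul_add_right: "fa_mul x (fa_add y z) = fa_add (fa_mul x y) (fa_mul x z)"
  by (auto simp: fa_mul_def fa_add_def distrib_left sum.distrib)

lemma fa_mul_smult_left: "fa_mul (fa_smult c x) z = fa_smult c (fa_mul x z)"
  by (auto simp: fa_mul_def fa_smult_def sum_distrib_left mult.assoc)

lemma fa_mul_smult_right: "fa_mul x (fa_smult c z) = fa_smult c (fa_mul x z)"
  by (auto simp: fa_mul_def fa_smult_def sum_distrib_left mult.assoc mult.left_commute)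

lemma fa_mul_zero_left: "fa_mul fa_zero z = fa_zero"
  by (auto simp: fa_mul_def fa_zero_def)

lemma fa_mul_zero_right: "fa_mul z fa_zero = fa_zero"
  by (auto simp: fa_mul_def fa_zero_def)

lemma fa_mul_one_left: "fa_mul (fa_word []) x = x"
proof (rule ext)
  fix w :: "gen list"
  have "fa_mul (fa_word []) x w = (\<Sum>i\<le>length w. if i = 0 then x w else 0)"
    unfolding fa_mul_def fa_word_def by (rule sum.cong) auto
  thus "fa_mul (fa_word []) x w = x w" by simp
qed

lemma fa_mul_one_right: "fa_mul x (fa_word []) = x"
proof (rule ext)
  fix w :: "gen list"
  have "fa_mul x (fa_word []) w = (\<Sum>i\<le>length w. if i = length w then x w else 0)"
    unfolding fa_mul_def fa_word_def by (rule sum.cong) auto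
  thus "fa_mul x (fa_word []) w = x w" by simp
qed

text \<open>Multiplying words is concatenation: a word is split at exactly one position.\<close>
lemma fa_word_mul: "fa_mul (fa_word v) (fa_word v') = fa_word (v @ v')"
proof (rule ext)
  fix w :: "gen list"
  have split: "(take i w = v \<and> drop i w = v') \<longleftrightarrow> (i = length v \<and> w = v @ v')"
    if "i \<le> length w" for i
    using that by (auto simp: append_eq_conv_conj)
  have "fa_mul (fa_word v) (fa_word v') w =
        (\<Sum>i\<le>length w. if i = length v \<and> w = v @ v' then 1 else 0)"
    unfolding fa_mul_def fa_word_def by (rule sum.cong[OF refl]) (simp add: split[symmetric])
  also have "\<dots> = fa_word (v @ v') w" by (auto simp: fa_word_def)
  finally show "fa_mul (fa_word v) (fa_word v') w = fa_word (v @ v') w" .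
qed

lemma fa_finite_zero: "fa_finite fa_zero"
  by (simp add: fa_finite_def fa_zero_def)

lemma fa_finite_add: "fa_finite x \<Longrightarrow> fa_finite y \<Longrightarrow> fa_finite (fa_add x y)"
  unfolding fa_finite_def fa_add_def
  by (rule finite_subset[of _ "{w. x w \<noteq> 0} \<union> {w. y w \<noteq> 0}"]) auto

lemma fa_finite_smult: "fa_finite x \<Longrightarrow> fa_finite (fa_smult c x)"
  unfolding fa_finite_def fa_smult_def
  by (rule finite_subset[of _ "{w. x w \<noteq> 0}"]) auto

lemma fa_finite_word: "fa_finite (fa_word v)"
  unfolding fa_finite_def fa_word_def
  by (rule finite_subset[of _ "{v}"]) auto

lemma fa_finite_mul: "fa_finite x \<Longrightarrow> fa_finite y \<Longrightarrow> fa_finite (fa_mul x y)"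
  unfolding fa_finite_def
proof (rule finite_subset[of _ "(\<lambda>(a,b). a @ b) ` ({w. x w \<noteq> 0} \<times> {w. y w \<noteq> 0})"])
  show "{w. fa_mul x y w \<noteq> 0} \<subseteq> (\<lambda>(a,b). a @ b) ` ({w. x w \<noteq> 0} \<times> {w. y w \<noteq> 0})"
  proof
    fix w assume "w \<in> {w. fa_mul x y w \<noteq> 0}"
    hence "(\<Sum>i\<le>length w. x (take i w) * y (drop i w)) \<noteq> 0" unfolding fa_mul_def by simp
    then obtain i where "x (take i w) * y (drop i w) \<noteq> 0"
      by (meson sum.not_neutral_contains_not_neutral)
    hence "(take i w, drop i w) \<in> {w. x w \<noteq> 0} \<times> {w. y w \<noteq> 0}" by auto
    moreover have "w = (\<lambda>(a,b). a @ b) (take i w, drop i w)" by simp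
    ultimately show "w \<in> (\<lambda>(a,b). a @ b) ` ({w. x w \<noteq> 0} \<times> {w. y w \<noteq> 0})"
      by blast
  qed
qed simp

lemma fa_finite_poly_h: "fa_finite (fa_poly_h p)"
  unfolding fa_finite_def
proof (rule finite_subset[of _ "(\<lambda>k. replicate k H) ` {..degree p}"])
  show "{w. fa_poly_h p w \<noteq> 0} \<subseteq> (\<lambda>k. replicate k H) ` {..degree p}"
  proof
    fix w assume "w \<in> {w. fa_poly_h p w \<noteq> 0}"
    hence "w = replicate (length w) H" "coeff p (length w) \<noteq> 0"
      by (simp_all add: fa_poly_h_def split: if_splits)
    moreover from this have "length w \<le> degree p" by (intro le_degree)
    ultimately show "w \<in> (\<lambda>k. replicate k H) ` {..degree p}" by blast
  qed
qed auto

lemma fa_finite_biv: "fa_finite (fa_biv f)"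
  unfolding fa_finite_def
proof (rule finite_subset)
  show "{w. fa_biv f w \<noteq> 0} \<subseteq>
    (\<Union>k\<le>degree f. \<Union>j\<le>degree (coeff f k). {replicate j H @ concat (replicate k [U, D])})"
  proof
    fix w assume "w \<in> {w. fa_biv f w \<noteq> 0}"
    thus "w \<in> (\<Union>k\<le>degree f. \<Union>j\<le>degree (coeff f k). {replicate j H @ concat (replicate k [U, D])})"
      unfolding fa_biv_def
      by (fastforce dest: sum.not_neutral_contains_not_neutral split: if_splits)
  qed
qed auto

typedef falg = "{x::fa. fa_finite x}" morphisms coeffs Abs_falg
  by (rule exI[of _ fa_zero]) (simp add: fa_finite_zero)

setup_lifting type_definition_falg

instantiation falg :: ring_1
begin
lift_definition zero_falg :: falg is fa_zero by (simp add: fa_finite_zero)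
lift_definition one_falg :: falg is "fa_word []" by (simp add: fa_finite_word)
lift_definition plus_falg :: "falg \<Rightarrow> falg \<Rightarrow> falg" is fa_add by (simp add: fa_finite_add)
lift_definition uminus_falg :: "falg \<Rightarrow> falg" is "fa_smult (-1)" by (simp add: fa_finite_smult)
lift_definition minus_falg :: "falg \<Rightarrow> falg \<Rightarrow> falg" is "\<lambda>x y. fa_add x (fa_smult (-1) y)"
  by (simp add: fa_finite_smult fa_finite_add)
lift_definition times_falg :: "falg \<Rightarrow> falg \<Rightarrow> falg" is fa_mul by (simp add: fa_finite_mul)
instance
proof
  fix a b c :: falg
  show "a + b + c = a + (b + c)" by transfer (auto simp: fa_add_def)
  show "a + b = b + a" by transfer (auto simp: fa_add_def)
  show "0 + a = a" by transfer (auto simp: fa_add_def fa_zero_def)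
  show "- a + a = 0" by transfer (auto simp: fa_add_def fa_zero_def fa_smult_def)
  show "a - b = a + - b" by transfer simp
  show "a * b * c = a * (b * c)" by transfer (rule fa_mul_assoc)
  show "1 * a = a" by transfer (rule fa_mul_one_left)
  show "a * 1 = a" by transfer (rule fa_mul_one_right)
  show "(a + b) * c = a * c + b * c" by transfer (rule fa_mul_add_left)
  show "a * (b + c) = a * b + a * c" by transfer (rule fa_mul_add_right)
  show "(0::falg) \<noteq> 1" by transfer (metis fa_zero_def fa_word_def zero_neq_one)
qed
end

lift_definition scale :: "complex \<Rightarrow> falg \<Rightarrow> falg" is fa_smult by (simp add: fa_finite_smult)
lift_definition word :: "gen list \<Rightarrow> falg" is fa_word by (simp add: fa_finite_word)
lift_definition poly_h :: "complex poly \<Rightarrow> falg" is fa_poly_h by (simp add: fa_finite_poly_h)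
lift_definition poly_hud :: "complex poly poly \<Rightarrow> falg" is fa_biv by (simp add: fa_finite_biv)

lemma scale_mult_left[simp]: "scale c x * y = scale c (x * y)"
  by transfer (rule fa_mul_smult_left)
lemma scale_mult_right[simp]: "x * scale c y = scale c (x * y)"
  by transfer (rule fa_mul_smult_right)
lemma scale_scale[simp]: "scale c (scale c' x) = scale (c * c') x"
  by transfer (auto simp: fa_smult_def)
lemma scale_add[simp]: "scale c (x + y) = scale c x + scale c y"
  by transfer (auto simp: fa_smult_def fa_add_def distrib_left)
lemma scale_add_scalar: "scale (c + c') x = scale c x + scale c' x"
  by transfer (auto simp: fa_smult_def fa_add_def distrib_right)
lemma scale_one[simp]: "scale 1 x = x"
  by transfer (auto simp: fa_smult_def)
lemma scale_zero[simp]: "scale 0 x = 0"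
  by transfer (auto simp: fa_smult_def fa_zero_def)
lemma scale_zero_right[simp]: "scale c 0 = 0"
  by transfer (auto simp: fa_smult_def fa_zero_def)
lemma scale_minus[simp]: "scale c (- x) = - scale c x"
  by transfer (auto simp: fa_smult_def)
lemma scale_diff[simp]: "scale c (x - y) = scale c x - scale c y"
  by transfer (auto simp: fa_smult_def fa_add_def algebra_simps)
lemma scale_neg: "scale (- c) x = - scale c x"
  by transfer (auto simp: fa_smult_def)
lemma scale_sum: "scale c (sum f A) = (\<Sum>a\<in>A. scale c (f a))"
  by (induction A rule: infinite_finite_induct) auto

lemma word_append: "word (v @ v') = word v * word v'"
  by transfer (simp add: fa_word_mul)
lemma word_Nil: "word [] = 1"
  by transfer simp

lemma coeffs_add: "coeffs (x + y) = fa_add (coeffs x) (coeffs y)" by transfer simp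
lemma coeffs_scale: "coeffs (scale c x) = fa_smult c (coeffs x)" by transfer simp
lemma coeffs_mul: "coeffs (x * y) = fa_mul (coeffs x) (coeffs y)" by transfer simp
lemma coeffs_zero: "coeffs 0 = fa_zero" by transfer simp
lemma coeffs_word: "coeffs (word w) = fa_word w" by transfer simp
lemma coeffs_sum: "coeffs (sum f A) w = (\<Sum>a\<in>A. coeffs (f a) w)"
  by (induction A rule: infinite_finite_induct)
    (auto simp: coeffs_zero fa_zero_def coeffs_add fa_add_def)
lemma finite_support: "finite {w. coeffs z w \<noteq> 0}"
  using coeffs[of z] by (simp add: fa_finite_def)

lemma falg_eqI: "(\<And>w. coeffs x w = coeffs y w) \<Longrightarrow> x = y"
  by (metis coeffs_inject ext)

lemma falg_expand: "z = (\<Sum>w\<in>{w. coeffs z w \<noteq> 0}. scale (coeffs z w) (word w))"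
proof (rule falg_eqI)
  fix w0
  have "coeffs (\<Sum>w\<in>{w. coeffs z w \<noteq> 0}. scale (coeffs z w) (word w)) w0 =
        (\<Sum>w\<in>{w. coeffs z w \<noteq> 0}. if w = w0 then coeffs z w else 0)"
    by (simp add: coeffs_sum coeffs_scale coeffs_word fa_smult_def fa_word_def)
      (rule sum.cong, auto)
  also have "\<dots> = coeffs z w0" using finite_support[of z] by (simp add: sum.delta)
  finally show "coeffs z w0 = coeffs (\<Sum>w\<in>{w. coeffs z w \<noteq> 0}. scale (coeffs z w) (word w)) w0"
    by simp
qed


section \<open>Polynomial expressions in h and ud\<close>

text \<open>The generators as ring elements (doubled letters keep u, d, h free as variable
  names); ud is the element u d that generates L_0 together with h.\<close>
definition uu :: falg where "uu = word [U]"
definition dd :: falg where "dd = word [D]"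
definition hh :: falg where "hh = word [H]"
abbreviation ud :: falg where "ud \<equiv> uu * dd"

lemma word_replicate: "word (replicate k g) = word [g] ^ k"
proof (induction k)
  case (Suc k)
  have "word (replicate (Suc k) g) = word ([g] @ replicate k g)" by simp
  also have "\<dots> = word [g] * word (replicate k g)" by (rule word_append)
  finally show ?case using Suc by simp
qed (simp add: word_Nil)

lemma word_ud_power: "word (concat (replicate k [U, D])) = ud ^ k"
proof (induction k)
  case (Suc k)
  have "word (concat (replicate (Suc k) [U, D])) = word ([U] @ [D] @ concat (replicate k [U, D]))"
    by simp
  also have "\<dots> = uu * (dd * ud ^ k)" by (simp only: word_append Suc uu_def dd_def)
  finally show ?case by (simp add: mult.assoc)
qed (simp add: word_Nil)

lemma mult_indicator: "(c::'a::{mult_zero,monoid_mult}) * (if P then 1 else 0) = (if P then c else 0)"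
  by simp

lemma poly_h_sum: "poly_h p = (\<Sum>j\<le>degree p. scale (coeff p j) (hh ^ j))"
proof (rule falg_eqI)
  fix w
  have "coeffs (\<Sum>j\<le>degree p. scale (coeff p j) (hh ^ j)) w =
        (\<Sum>j\<le>degree p. if w = replicate j H then coeff p j else 0)"
    by (simp add: coeffs_sum coeffs_scale hh_def word_replicate[symmetric] coeffs_word
        fa_smult_def fa_word_def mult_indicator)
  also have "\<dots> = coeffs (poly_h p) w"
  proof (cases "w = replicate (length w) H")
    case True
    hence "(w = replicate j H) \<longleftrightarrow> j = length w" for j by (metis length_replicate)
    thus ?thesis using True by (simp add: poly_h.rep_eq fa_poly_h_def coeff_eq_0 not_le)
  next
    case False
    hence "w \<noteq> replicate j H" for j by (metis length_replicate)
    thus ?thesis using False by (simp add: poly_h.rep_eq fa_poly_h_def)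
  qed
  finally show "coeffs (poly_h p) w = coeffs (\<Sum>j\<le>degree p. scale (coeff p j) (hh ^ j)) w"
    by simp
qed

lemma poly_hud_sum: "poly_hud f = (\<Sum>k\<le>degree f. poly_h (coeff f k) * ud ^ k)"
proof (rule falg_eqI)
  fix w
  have e: "hh ^ j * ud ^ k = word (replicate j H @ concat (replicate k [U, D]))" for j k
    by (simp add: word_append word_ud_power hh_def word_replicate)
  show "coeffs (poly_hud f) w = coeffs (\<Sum>k\<le>degree f. poly_h (coeff f k) * ud ^ k) w"
    by (simp add: poly_h_sum sum_distrib_right coeffs_sum coeffs_scale e coeffs_word
        fa_smult_def fa_word_def mult_indicator poly_hud.rep_eq fa_biv_def)
qed

lemma poly_h_bound: "degree p \<le> N \<Longrightarrow> poly_h p = (\<Sum>j\<le>N. scale (coeff p j) (hh ^ j))"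
  unfolding poly_h_sum by (rule sum.mono_neutral_left) (auto simp: coeff_eq_0)

lemma poly_h_add: "poly_h (p + q) = poly_h p + poly_h q"
proof -
  let ?N = "max (degree p) (degree q)"
  have "poly_h (p + q) = (\<Sum>j\<le>?N. scale (coeff (p + q) j) (hh ^ j))"
    by (rule poly_h_bound) (simp add: degree_add_le)
  also have "\<dots> = poly_h p + poly_h q"
    by (simp add: scale_add_scalar sum.distrib poly_h_bound[symmetric])
  finally show ?thesis .
qed

lemma poly_h_smult: "poly_h (smult c p) = scale c (poly_h p)"
proof -
  have "poly_h (smult c p) = (\<Sum>j\<le>degree p. scale (coeff (smult c p) j) (hh ^ j))"
    by (rule poly_h_bound) simp
  thus ?thesis by (simp add: poly_h_sum scale_sum)
qed

lemma poly_h_zero[simp]: "poly_h 0 = 0"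
  by (simp add: poly_h_sum)

lemma poly_h_const: "poly_h [:c:] = scale c 1"
  by (simp add: poly_h_sum)

lemma poly_h_pCons: "poly_h (pCons a p) = scale a 1 + hh * poly_h p"
proof -
  have "poly_h (pCons a p) = (\<Sum>j\<le>Suc (degree p). scale (coeff (pCons a p) j) (hh ^ j))"
    by (rule poly_h_bound) (simp add: degree_pCons_le)
  also have "\<dots> = scale a 1 + (\<Sum>j\<le>degree p. scale (coeff p j) (hh ^ Suc j))"
    by (subst sum.atMost_Suc_shift) simp
  finally show ?thesis by (simp add: poly_h_sum sum_distrib_left)
qed

lemma poly_h_linear: "poly_h [:c0, c1:] = scale c0 1 + scale c1 hh"
  by (simp add: poly_h_pCons poly_h_const)

lemma poly_h_mult: "poly_h (p * q) = poly_h p * poly_h q"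
proof (induction p)
  case (pCons a p)
  have "poly_h (pCons a p * q) = scale a (poly_h q) + hh * poly_h (p * q)"
    by (simp add: poly_h_add poly_h_smult poly_h_pCons)
  thus ?case by (simp add: pCons.IH poly_h_pCons algebra_simps)
qed simp

text \<open>The corresponding rules for f \<mapsto> f(h,ud); multiplicativity only holds modulo the
  relations (h and ud commute in L, not in the free algebra).\<close>
lemma poly_hud_bound: "degree f \<le> N \<Longrightarrow> poly_hud f = (\<Sum>k\<le>N. poly_h (coeff f k) * ud ^ k)"
  unfolding poly_hud_sum by (rule sum.mono_neutral_left) (auto simp: coeff_eq_0)

lemma poly_hud_add: "poly_hud (f + g) = poly_hud f + poly_hud g"
proof -
  let ?N = "max (degree f) (degree g)"
  have "poly_hud (f + g) = (\<Sum>k\<le>?N. poly_h (coeff (f + g) k) * ud ^ k)"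
    by (rule poly_hud_bound) (simp add: degree_add_le)
  also have "\<dots> = poly_hud f + poly_hud g"
    by (simp add: poly_h_add sum.distrib distrib_right poly_hud_bound[symmetric])
  finally show ?thesis .
qed

lemma poly_hud_zero[simp]: "poly_hud 0 = 0"
  by (simp add: poly_hud_sum)

lemma poly_hud_smult: "poly_hud (smult c f) = poly_h c * poly_hud f"
proof -
  have "poly_hud (smult c f) = (\<Sum>k\<le>degree f. poly_h (coeff (smult c f) k) * ud ^ k)"
    by (rule poly_hud_bound) simp
  thus ?thesis by (simp add: poly_hud_sum sum_distrib_left poly_h_mult mult.assoc)
qed

lemma poly_hud_const: "poly_hud [:p:] = poly_h p"
  by (simp add: poly_hud_sum)

lemma poly_hud_pCons: "poly_hud (pCons c f) = poly_h c + poly_hud f * ud"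
proof -
  have "poly_hud (pCons c f) = (\<Sum>k\<le>Suc (degree f). poly_h (coeff (pCons c f) k) * ud ^ k)"
    by (rule poly_hud_bound) (simp add: degree_pCons_le)
  also have "\<dots> = poly_h c + (\<Sum>k\<le>degree f. poly_h (coeff f k) * ud ^ k) * ud"
    by (subst sum.atMost_Suc_shift) (simp add: sum_distrib_right mult.assoc power_commutes)
  finally show ?thesis by (simp add: poly_hud_sum)
qed

lemma poly_hud_one[simp]: "poly_hud 1 = 1"
  by (simp add: one_pCons poly_hud_const poly_h_const)

lemma poly_hud_y: "poly_hud [:0, 1:] = ud"
  by (simp add: poly_hud_pCons one_pCons[symmetric] poly_hud_const)

lemma poly_hud_x: "poly_hud [:[:0, 1:]:] = hh"
  by (simp add: poly_hud_const poly_h_pCons)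


section \<open>Two-sided ideals and congruence in the ring\<close>

lemma fa_ideal_finite:
  assumes "\<And>g. g \<in> G \<Longrightarrow> fa_finite g"
  shows "x \<in> fa_ideal G \<Longrightarrow> fa_finite x"
  by (induction rule: fa_ideal.induct) (auto intro: fa_finite_zero fa_finite_add fa_finite_mul assms)

lemma fa_ideal_mul_left: "x \<in> fa_ideal G \<Longrightarrow> fa_finite z \<Longrightarrow> fa_mul z x \<in> fa_ideal G"
proof (induction rule: fa_ideal.induct)
  case (gen g a b)
  have "fa_mul z (fa_mul (fa_mul a g) b) = fa_mul (fa_mul (fa_mul z a) g) b"
    by (simp add: fa_mul_assoc)
  thus ?case using gen by (simp add: fa_ideal.gen fa_finite_mul)
qed (simp_all add: fa_mul_zero_right fa_mul_add_right fa_ideal.zero fa_ideal.add)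

lemma fa_ideal_mul_right: "x \<in> fa_ideal G \<Longrightarrow> fa_finite z \<Longrightarrow> fa_mul x z \<in> fa_ideal G"
proof (induction rule: fa_ideal.induct)
  case (gen g a b)
  have "fa_mul (fa_mul (fa_mul a g) b) z = fa_mul (fa_mul a g) (fa_mul b z)"
    by (simp add: fa_mul_assoc)
  thus ?case using gen by (simp add: fa_ideal.gen fa_finite_mul)
qed (simp_all add: fa_mul_zero_left fa_mul_add_left fa_ideal.zero fa_ideal.add)

lemma fa_ideal_smult: "x \<in> fa_ideal G \<Longrightarrow> fa_smult c x \<in> fa_ideal G"
proof (induction rule: fa_ideal.induct)
  case zero
  have "fa_smult c fa_zero = fa_zero" by (simp add: fa_smult_def fa_zero_def)
  thus ?case by (simp add: fa_ideal.zero)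
next
  case (gen g a b)
  have "fa_smult c (fa_mul (fa_mul a g) b) = fa_mul (fa_mul (fa_smult c a) g) b"
    by (simp add: fa_mul_smult_left)
  thus ?case using gen by (simp add: fa_ideal.gen fa_finite_smult)
next
  case (add x y)
  have "fa_smult c (fa_add x y) = fa_add (fa_smult c x) (fa_smult c y)"
    by (auto simp: fa_smult_def fa_add_def distrib_left)
  thus ?case using add by (simp add: fa_ideal.add)
qed

lemma fa_ideal_generator: "g \<in> G \<Longrightarrow> g \<in> fa_ideal G"
  using fa_ideal.gen[of g G "fa_word []" "fa_word []"]
  by (simp add: fa_finite_word fa_mul_one_left fa_mul_one_right)

definition ideal_of :: "fa set \<Rightarrow> falg set" where
  "ideal_of G = {z. coeffs z \<in> fa_ideal G}"

definition congr :: "fa set \<Rightarrow> falg \<Rightarrow> falg \<Rightarrow> bool" where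
  "congr G x y \<longleftrightarrow> x - y \<in> ideal_of G"

lemma ideal_of_zero[simp]: "0 \<in> ideal_of G"
  by (simp add: ideal_of_def coeffs_zero fa_ideal.zero)

lemma ideal_of_add: "x \<in> ideal_of G \<Longrightarrow> y \<in> ideal_of G \<Longrightarrow> x + y \<in> ideal_of G"
  by (simp add: ideal_of_def coeffs_add fa_ideal.add)

lemma ideal_of_scale: "x \<in> ideal_of G \<Longrightarrow> scale c x \<in> ideal_of G"
  by (simp add: ideal_of_def coeffs_scale fa_ideal_smult)

lemma ideal_of_minus: "x \<in> ideal_of G \<Longrightarrow> - x \<in> ideal_of G"
  using ideal_of_scale[of x G "-1"] by (simp add: scale_neg)

lemma ideal_of_diff: "x \<in> ideal_of G \<Longrightarrow> y \<in> ideal_of G \<Longrightarrow> x - y \<in> ideal_of G"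
  by (metis ideal_of_add ideal_of_minus diff_conv_add_uminus)

lemma ideal_of_mult_left: "x \<in> ideal_of G \<Longrightarrow> z * x \<in> ideal_of G"
  using coeffs[of z] by (simp add: ideal_of_def coeffs_mul fa_ideal_mul_left)

lemma ideal_of_mult_right: "x \<in> ideal_of G \<Longrightarrow> x * z \<in> ideal_of G"
  using coeffs[of z] by (simp add: ideal_of_def coeffs_mul fa_ideal_mul_right)

lemma ideal_of_sum: "(\<And>a. a \<in> A \<Longrightarrow> f a \<in> ideal_of G) \<Longrightarrow> sum f A \<in> ideal_of G"
  by (induction A rule: infinite_finite_induct) (auto intro: ideal_of_add)

lemma ideal_of_generator: "coeffs z \<in> G \<Longrightarrow> z \<in> ideal_of G"
  by (simp add: ideal_of_def fa_ideal_generator)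

lemma congr_refl[simp]: "congr G x x"
  by (simp add: congr_def)

lemma congr_sym: "congr G x y \<Longrightarrow> congr G y x"
  unfolding congr_def by (metis ideal_of_minus minus_diff_eq)

lemma congr_trans[trans]: "congr G x y \<Longrightarrow> congr G y z \<Longrightarrow> congr G x z"
  unfolding congr_def by (metis ideal_of_add diff_add_cancel add_diff_eq)

lemma congr_add: "congr G x y \<Longrightarrow> congr G x' y' \<Longrightarrow> congr G (x + x') (y + y')"
  unfolding congr_def by (metis ideal_of_add add_diff_add)

lemma congr_scale: "congr G x y \<Longrightarrow> congr G (scale c x) (scale c y)"
  unfolding congr_def by (metis ideal_of_scale scale_diff)

lemma congr_mult_left: "congr G x y \<Longrightarrow> congr G (z * x) (z * y)"
  unfolding congr_def by (metis ideal_of_mult_left right_diff_distrib)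

lemma congr_mult_right: "congr G x y \<Longrightarrow> congr G (x * z) (y * z)"
  unfolding congr_def by (metis ideal_of_mult_right left_diff_distrib)

lemma congr_sum: "(\<And>a. a \<in> A \<Longrightarrow> congr G (f a) (g a)) \<Longrightarrow> congr G (sum f A) (sum g A)"
  unfolding congr_def by (metis (mono_tags) ideal_of_sum sum_subtractf)

lemma congr_zeroI: "x \<in> ideal_of G \<Longrightarrow> congr G x 0"
  by (simp add: congr_def)

section \<open>Bivariate polynomials: evaluation and interpolation\<close>

lemma poly2_zero[simp]: "poly2 0 a b = 0"
  by (simp add: poly2_def)
lemma poly2_add[simp]: "poly2 (f + g) a b = poly2 f a b + poly2 g a b"
  by (simp add: poly2_def)
lemma poly2_diff[simp]: "poly2 (f - g) a b = poly2 f a b - poly2 g a b"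
  by (simp add: poly2_def)
lemma poly2_mult[simp]: "poly2 (f * g) a b = poly2 f a b * poly2 g a b"
  by (simp add: poly2_def)
lemma poly2_const[simp]: "poly2 [:p:] a b = poly p a"
  by (simp add: poly2_def)
lemma poly2_smult[simp]: "poly2 (smult c f) a b = poly c a * poly2 f a b"
  by (simp add: poly2_def)
lemma poly2_pCons: "poly2 (pCons c f) a b = poly c a + b * poly2 f a b"
  by (simp add: poly2_def)
lemma poly2_prod: "poly2 (prod f A) a b = (\<Prod>i\<in>A. poly2 (f i) a b)"
  by (induction A rule: infinite_finite_induct) (auto simp: poly2_def)
lemma poly2_sum: "poly2 (sum f A) a b = (\<Sum>i\<in>A. poly2 (f i) a b)"
  by (induction A rule: infinite_finite_induct) (auto simp: poly2_def)

definition separator :: "complex \<times> complex \<Rightarrow> complex \<times> complex \<Rightarrow> complex poly poly" where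
  "separator p q = (if fst p \<noteq> fst q
     then [:[:- fst q / (fst p - fst q), 1 / (fst p - fst q):]:]
     else [:[:- snd q / (snd p - snd q):], [:1 / (snd p - snd q):]:])"

lemma separator_eval: "poly2 (separator p q) a b =
    (if fst p \<noteq> fst q then (a - fst q) / (fst p - fst q) else (b - snd q) / (snd p - snd q))"
  by (simp add: separator_def poly2_pCons diff_divide_distrib algebra_simps)

lemma separator_at_p: "p \<noteq> q \<Longrightarrow> poly2 (separator p q) (fst p) (snd p) = 1"
  by (cases p; cases q) (auto simp: separator_eval)

lemma separator_at_q: "poly2 (separator p q) (fst q) (snd q) = 0"
  by (simp add: separator_eval)

text \<open>Lagrange interpolation in C^2: any values can be prescribed at finitely many distinct
  points.  This is the only place where distinctness of the weights enters.\<close>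
lemma bivariate_interpolation:
  fixes P :: "nat \<Rightarrow> complex \<times> complex" and t :: "nat \<Rightarrow> complex"
  assumes distinct: "\<forall>i\<le>n. \<forall>j\<le>n. i \<noteq> j \<longrightarrow> P i \<noteq> P j"
  shows "\<exists>f. \<forall>i\<le>n. poly2 f (fst (P i)) (snd (P i)) = t i"
proof -
  define lag where "lag i = (\<Prod>j\<in>{..n} - {i}. separator (P i) (P j))" for i
  have lag: "poly2 (lag i) (fst (P k)) (snd (P k)) = (if k = i then 1 else 0)"
    if "i \<le> n" "k \<le> n" for i k
  proof (cases "k = i")
    case True
    thus ?thesis using that distinct by (simp add: lag_def poly2_prod separator_at_p)
  next
    case False
    hence "k \<in> {..n} - {i}" using that by auto
    hence "(\<Prod>j\<in>{..n} - {i}. poly2 (separator (P i) (P j)) (fst (P k)) (snd (P k))) = 0"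
      by (intro prod_zero) (auto intro!: bexI[of _ k] simp: separator_at_q)
    thus ?thesis using False by (simp add: lag_def poly2_prod)
  qed
  show ?thesis
  proof (intro exI allI impI)
    fix k assume k: "k \<le> n"
    have "poly2 (\<Sum>i\<le>n. smult [:t i:] (lag i)) (fst (P k)) (snd (P k)) =
          (\<Sum>i\<le>n. t i * (if k = i then 1 else 0))"
      using k by (simp add: poly2_sum lag)
    also have "\<dots> = t k" using k by (simp add: mult_indicator)
    finally show "poly2 (\<Sum>i\<le>n. smult [:t i:] (lag i)) (fst (P k)) (snd (P k)) = t k" .
  qed
qed


section \<open>The defining ideal and computations modulo it\<close>

text \<open>Throughout, the parameters r, s, gamma, phi, lambda and n are fixed; no hypotheses on
  the weights are needed for the algebraic manipulations of this section.\<close>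
locale down_up =
  fixes r s \<gamma> :: complex and \<phi> :: "complex poly" and lam :: complex and n :: nat
begin

abbreviation wlam :: "nat \<Rightarrow> complex" where "wlam i \<equiv> fst (wt r s \<gamma> \<phi> lam i)"
abbreviation wbeta :: "nat \<Rightarrow> complex" where "wbeta i \<equiv> snd (wt r s \<gamma> \<phi> lam i)"

definition gens :: "fa set" where
  "gens = dua_rels r s \<gamma> \<phi> \<union>
     {fa_word (replicate (Suc n) U), fa_word (replicate (Suc n) D)} \<union>
     {fa_biv f | f. \<forall>i\<le>n. poly2 f (wlam i) (wbeta i) = 0}"

abbreviation rel_ideal :: "falg set" where "rel_ideal \<equiv> ideal_of gens"

abbreviation congr_gens :: "falg \<Rightarrow> falg \<Rightarrow> bool" (infix "\<approx>" 50) where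
  "x \<approx> y \<equiv> congr gens x y"

definition rel_hu :: falg where "rel_hu = hh * uu - scale r (uu * hh) - scale \<gamma> uu"
definition rel_dh :: falg where "rel_dh = dd * hh - scale r (hh * dd) - scale \<gamma> dd"
definition rel_du :: falg where "rel_du = dd * uu - scale s ud - poly_h \<phi>"

lemma coeffs_relation:
  "coeffs (x * y - scale c (y * x) - z) =
     fa_add (fa_mul (coeffs x) (coeffs y))
       (fa_add (fa_smult (- c) (fa_mul (coeffs y) (coeffs x))) (fa_smult (- 1) (coeffs z)))"
proof -
  have "x * y - scale c (y * x) - z = x * y + (scale (- c) (y * x) + scale (- 1) z)"
    by (simp add: scale_neg)
  thus ?thesis by (simp only: coeffs_add coeffs_scale coeffs_mul)
qed

lemma gens_eq: "gens = coeffs ` ({rel_hu, rel_dh, rel_du, uu ^ Suc n, dd ^ Suc n} \<union>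
    {poly_hud f | f. \<forall>i\<le>n. poly2 f (wlam i) (wbeta i) = 0})"
proof -
  have smult_minus: "fa_smult (- 1) (fa_smult c x) = fa_smult (- c) x" for c x
    by (simp add: fa_smult_def)
  have "coeffs rel_hu = fa_add (fa_word [H,U])
      (fa_add (fa_smult (-r) (fa_word [U,H])) (fa_smult (-\<gamma>) (fa_word [U])))"
    "coeffs rel_dh = fa_add (fa_word [D,H])
      (fa_add (fa_smult (-r) (fa_word [H,D])) (fa_smult (-\<gamma>) (fa_word [D])))"
    "coeffs rel_du = fa_add (fa_word [D,U])
      (fa_add (fa_smult (-s) (fa_word [U,D])) (fa_smult (-1) (fa_poly_h \<phi>)))"
    by (simp_all only: rel_hu_def rel_dh_def rel_du_def coeffs_relation uu_def dd_def hh_def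
        coeffs_scale coeffs_word fa_word_mul smult_minus poly_h.rep_eq, simp_all)
  moreover have "coeffs (uu ^ Suc n) = fa_word (replicate (Suc n) U)"
    "coeffs (dd ^ Suc n) = fa_word (replicate (Suc n) D)"
    by (simp_all only: uu_def dd_def word_replicate[symmetric] coeffs_word)
  moreover have "coeffs ` {poly_hud f | f. \<forall>i\<le>n. poly2 f (wlam i) (wbeta i) = 0} =
      {fa_biv f | f. \<forall>i\<le>n. poly2 f (wlam i) (wbeta i) = 0}"
    by (auto simp: poly_hud.rep_eq[symmetric])
  ultimately show ?thesis
    unfolding gens_def dua_rels_def image_Un image_insert image_empty by (auto simp del: power_Suc)
qed

lemma gens_finite: "g \<in> gens \<Longrightarrow> fa_finite g"
  using coeffs by (auto simp: gens_eq)

lemma gens_in_rel_ideal: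
  "rel_hu \<in> rel_ideal" "rel_dh \<in> rel_ideal" "rel_du \<in> rel_ideal"
  "uu ^ Suc n \<in> rel_ideal" "dd ^ Suc n \<in> rel_ideal"
  by (auto intro: ideal_of_generator simp: gens_eq)

lemma poly_hud_vanishing: "\<forall>i\<le>n. poly2 f (wlam i) (wbeta i) = 0 \<Longrightarrow> poly_hud f \<in> rel_ideal"
  by (rule ideal_of_generator) (auto simp: gens_eq)

lemma hu_rule: "hh * uu \<approx> scale r (uu * hh) + scale \<gamma> uu"
  using gens_in_rel_ideal(1) by (simp add: congr_def rel_hu_def diff_diff_eq)

lemma dh_rule: "dd * hh \<approx> scale r (hh * dd) + scale \<gamma> dd"
  using gens_in_rel_ideal(2) by (simp add: congr_def rel_dh_def diff_diff_eq)

lemma du_rule: "dd * uu \<approx> scale s ud + poly_h \<phi>"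
  using gens_in_rel_ideal(3) by (simp add: congr_def rel_du_def diff_diff_eq)


lemma ud_hh: "ud * hh \<approx> hh * ud"
proof -
  have "ud * hh - hh * ud = uu * rel_dh - rel_hu * dd"
    by (simp add: rel_dh_def rel_hu_def algebra_simps)
  thus ?thesis using gens_in_rel_ideal
    by (simp add: congr_def ideal_of_diff ideal_of_mult_left ideal_of_mult_right)
qed

lemma ud_poly_h: "ud * poly_h p \<approx> poly_h p * ud"
proof (induction p)
  case (pCons a p)
  have "ud * poly_h (pCons a p) = scale a ud + (ud * hh) * poly_h p"
    by (simp add: poly_h_pCons algebra_simps)
  also have "\<dots> \<approx> scale a ud + (hh * ud) * poly_h p"
    by (intro congr_add congr_refl congr_mult_right ud_hh)
  also have "\<dots> = scale a ud + hh * (ud * poly_h p)" by (simp add: mult.assoc)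
  also have "\<dots> \<approx> scale a ud + hh * (poly_h p * ud)"
    by (intro congr_add congr_refl congr_mult_left pCons.IH)
  also have "\<dots> = poly_h (pCons a p) * ud" by (simp add: poly_h_pCons algebra_simps)
  finally show ?case .
qed simp

lemma ud_poly_hud: "ud * poly_hud f \<approx> poly_hud f * ud"
proof -
  have "ud * poly_hud f = (\<Sum>k\<le>degree f. (ud * poly_h (coeff f k)) * ud ^ k)"
    by (simp add: poly_hud_sum sum_distrib_left mult.assoc)
  also have "\<dots> \<approx> (\<Sum>k\<le>degree f. (poly_h (coeff f k) * ud) * ud ^ k)"
    by (intro congr_sum congr_mult_right ud_poly_h)
  also have "\<dots> = poly_hud f * ud"
    by (simp add: poly_hud_sum sum_distrib_right mult.assoc power_commutes)
  finally show ?thesis .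
qed

lemma poly_hud_mult: "poly_hud (f * g) \<approx> poly_hud f * poly_hud g"
proof (induction f)
  case (pCons c f)
  have "poly_hud (pCons c f * g) = poly_h c * poly_hud g + poly_hud (f * g) * ud"
    by (simp add: poly_hud_add poly_hud_smult poly_hud_pCons)
  also have "\<dots> \<approx> poly_h c * poly_hud g + poly_hud f * (poly_hud g * ud)"
    by (simp add: mult.assoc[symmetric] congr_add congr_mult_right pCons.IH)
  also have "\<dots> \<approx> poly_h c * poly_hud g + poly_hud f * (ud * poly_hud g)"
    by (intro congr_add congr_refl congr_mult_left congr_sym[OF ud_poly_hud])
  also have "\<dots> = poly_hud (pCons c f) * poly_hud g"
    by (simp add: poly_hud_pCons algebra_simps)
  finally show ?case .
qed simp

lemma dd_poly_h: "dd * poly_h p \<approx> poly_h (pcompose p [:\<gamma>, r:]) * dd"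
proof (induction p)
  case (pCons a p)
  let ?q = "pcompose p [:\<gamma>, r:]"
  have "dd * poly_h (pCons a p) = scale a dd + (dd * hh) * poly_h p"
    by (simp add: poly_h_pCons algebra_simps)
  also have "\<dots> \<approx> scale a dd + (scale r (hh * dd) + scale \<gamma> dd) * poly_h p"
    by (intro congr_add congr_refl congr_mult_right dh_rule)
  also have "\<dots> = scale a dd + scale r (hh * (dd * poly_h p)) + scale \<gamma> (dd * poly_h p)"
    by (simp add: algebra_simps)
  also have "\<dots> \<approx> scale a dd + scale r (hh * (poly_h ?q * dd)) + scale \<gamma> (poly_h ?q * dd)"
    by (intro congr_add congr_refl congr_scale congr_mult_left pCons.IH)
  also have "\<dots> = poly_h (pcompose (pCons a p) [:\<gamma>, r:]) * dd"
    by (simp add: pcompose_pCons poly_h_add poly_h_mult poly_h_const poly_h_linear poly_h_smult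
        poly_h_pCons algebra_simps)
  finally show ?case .
qed simp

lemma poly_h_uu: "poly_h p * uu \<approx> uu * poly_h (pcompose p [:\<gamma>, r:])"
proof (induction p)
  case (pCons a p)
  let ?q = "pcompose p [:\<gamma>, r:]"
  have "poly_h (pCons a p) * uu = scale a uu + hh * (poly_h p * uu)"
    by (simp add: poly_h_pCons algebra_simps)
  also have "\<dots> \<approx> scale a uu + (hh * uu) * poly_h ?q"
    by (simp add: mult.assoc congr_add congr_mult_left pCons.IH)
  also have "\<dots> \<approx> scale a uu + (scale r (uu * hh) + scale \<gamma> uu) * poly_h ?q"
    by (intro congr_add congr_refl congr_mult_right hu_rule)
  also have "\<dots> = uu * poly_h (pcompose (pCons a p) [:\<gamma>, r:])"
    by (simp add: pcompose_pCons poly_h_add poly_h_mult poly_h_const poly_h_linear poly_h_smult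
        poly_h_pCons algebra_simps)
  finally show ?case .
qed simp

text \<open>The twistable
  polynomials contain constants and y and are closed under sums and products, so all f are.\<close>
definition twistable :: "complex poly poly \<Rightarrow> bool" where
  "twistable f \<longleftrightarrow> (\<exists>g. (\<forall>a b. poly2 g a b = poly2 f (r * a + \<gamma>) (s * b + poly \<phi> a)) \<and>
       dd * poly_hud f \<approx> poly_hud g * dd \<and> poly_hud f * uu \<approx> uu * poly_hud g)"

lemma twistable_add: "twistable f \<Longrightarrow> twistable g \<Longrightarrow> twistable (f + g)"
  unfolding twistable_def
proof (elim exE conjE)
  fix f' g'
  assume f: "\<forall>a b. poly2 f' a b = poly2 f (r * a + \<gamma>) (s * b + poly \<phi> a)"
    "dd * poly_hud f \<approx> poly_hud f' * dd" "poly_hud f * uu \<approx> uu * poly_hud f'"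
  assume g: "\<forall>a b. poly2 g' a b = poly2 g (r * a + \<gamma>) (s * b + poly \<phi> a)"
    "dd * poly_hud g \<approx> poly_hud g' * dd" "poly_hud g * uu \<approx> uu * poly_hud g'"
  show "\<exists>h. (\<forall>a b. poly2 h a b = poly2 (f + g) (r * a + \<gamma>) (s * b + poly \<phi> a)) \<and>
       dd * poly_hud (f + g) \<approx> poly_hud h * dd \<and> poly_hud (f + g) * uu \<approx> uu * poly_hud h"
  proof (intro exI[of _ "f' + g'"] conjI allI)
    show "poly2 (f' + g') a b = poly2 (f + g) (r * a + \<gamma>) (s * b + poly \<phi> a)" for a b
      using f g by simp
    show "dd * poly_hud (f + g) \<approx> poly_hud (f' + g') * dd"
      using congr_add[OF f(2) g(2)] by (simp add: poly_hud_add algebra_simps)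
    show "poly_hud (f + g) * uu \<approx> uu * poly_hud (f' + g')"
      using congr_add[OF f(3) g(3)] by (simp add: poly_hud_add algebra_simps)
  qed
qed

lemma twistable_mult: "twistable f \<Longrightarrow> twistable g \<Longrightarrow> twistable (f * g)"
  unfolding twistable_def
proof (elim exE conjE)
  fix f' g'
  assume f: "\<forall>a b. poly2 f' a b = poly2 f (r * a + \<gamma>) (s * b + poly \<phi> a)"
    "dd * poly_hud f \<approx> poly_hud f' * dd" "poly_hud f * uu \<approx> uu * poly_hud f'"
  assume g: "\<forall>a b. poly2 g' a b = poly2 g (r * a + \<gamma>) (s * b + poly \<phi> a)"
    "dd * poly_hud g \<approx> poly_hud g' * dd" "poly_hud g * uu \<approx> uu * poly_hud g'"
  show "\<exists>h. (\<forall>a b. poly2 h a b = poly2 (f * g) (r * a + \<gamma>) (s * b + poly \<phi> a)) \<and>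
       dd * poly_hud (f * g) \<approx> poly_hud h * dd \<and> poly_hud (f * g) * uu \<approx> uu * poly_hud h"
  proof (intro exI[of _ "f' * g'"] conjI allI)
    show "poly2 (f' * g') a b = poly2 (f * g) (r * a + \<gamma>) (s * b + poly \<phi> a)" for a b
      using f g by simp
    have "dd * poly_hud (f * g) \<approx> (dd * poly_hud f) * poly_hud g"
      by (simp add: mult.assoc congr_mult_left poly_hud_mult)
    also have "\<dots> \<approx> poly_hud f' * (dd * poly_hud g)"
      by (simp add: mult.assoc[symmetric] congr_mult_right f(2))
    also have "\<dots> \<approx> (poly_hud f' * poly_hud g') * dd"
      by (simp add: mult.assoc congr_mult_left g(2))
    also have "\<dots> \<approx> poly_hud (f' * g') * dd"
      by (intro congr_mult_right congr_sym[OF poly_hud_mult])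
    finally show "dd * poly_hud (f * g) \<approx> poly_hud (f' * g') * dd" .
    have "poly_hud (f * g) * uu \<approx> poly_hud f * (poly_hud g * uu)"
      by (simp add: mult.assoc[symmetric] congr_mult_right poly_hud_mult)
    also have "\<dots> \<approx> (poly_hud f * uu) * poly_hud g'"
      by (simp add: mult.assoc congr_mult_left g(3))
    also have "\<dots> \<approx> uu * (poly_hud f' * poly_hud g')"
      by (simp add: mult.assoc[symmetric] congr_mult_right f(3))
    also have "\<dots> \<approx> uu * poly_hud (f' * g')"
      by (intro congr_mult_left congr_sym[OF poly_hud_mult])
    finally show "poly_hud (f * g) * uu \<approx> uu * poly_hud (f' * g')" .
  qed
qed

lemma twistable_const: "twistable [:p:]"
  unfolding twistable_def
proof (intro exI[of _ "[:pcompose p [:\<gamma>, r:]:]"] conjI allI)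
  show "poly2 [:pcompose p [:\<gamma>, r:]:] a b = poly2 [:p:] (r * a + \<gamma>) (s * b + poly \<phi> a)" for a b
    by (simp add: poly_pcompose algebra_simps)
  show "dd * poly_hud [:p:] \<approx> poly_hud [:pcompose p [:\<gamma>, r:]:] * dd"
    by (simp add: poly_hud_const dd_poly_h)
  show "poly_hud [:p:] * uu \<approx> uu * poly_hud [:pcompose p [:\<gamma>, r:]:]"
    by (simp add: poly_hud_const poly_h_uu)
qed

text \<open>For y this is the relation du = s ud + phi(h), read in both directions.\<close>
lemma twistable_y: "twistable [:0, 1:]"
  unfolding twistable_def
proof (intro exI[of _ "pCons \<phi> [:[:s:]:]"] conjI allI)
  let ?g = "pCons \<phi> [:[:s:]:]"
  have g: "poly_hud ?g = scale s ud + poly_h \<phi>"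
    by (simp add: poly_hud_pCons poly_hud_const poly_h_const)
  show "poly2 ?g a b = poly2 [:0, 1:] (r * a + \<gamma>) (s * b + poly \<phi> a)" for a b
    by (simp add: poly2_pCons algebra_simps)
  have "dd * poly_hud [:0, 1:] = (dd * uu) * dd" by (simp add: poly_hud_y mult.assoc)
  also have "\<dots> \<approx> poly_hud ?g * dd" unfolding g by (intro congr_mult_right du_rule)
  finally show "dd * poly_hud [:0, 1:] \<approx> poly_hud ?g * dd" .
  have "poly_hud [:0, 1:] * uu = uu * (dd * uu)" by (simp add: poly_hud_y mult.assoc)
  also have "\<dots> \<approx> uu * poly_hud ?g" unfolding g by (intro congr_mult_left du_rule)
  finally show "poly_hud [:0, 1:] * uu \<approx> uu * poly_hud ?g" .
qed

lemma twistable_all: "twistable f"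
proof (induction f)
  case (pCons c f)
  have "pCons c f = [:c:] + [:0, 1:] * f" by simp
  thus ?case using twistable_add[OF twistable_const twistable_mult[OF twistable_y pCons.IH]]
    by simp
qed (use twistable_const[of 0] in simp)

lemma twist:
  obtains g where "\<forall>a b. poly2 g a b = poly2 f (r * a + \<gamma>) (s * b + poly \<phi> a)"
    "dd * poly_hud f \<approx> poly_hud g * dd" "poly_hud f * uu \<approx> uu * poly_hud g"
  using twistable_all[of f] unfolding twistable_def by blast


inductive_set spanned :: "falg set" where
  monomial: "uu ^ a * poly_hud f * dd ^ b \<in> spanned"
| add: "x \<in> spanned \<Longrightarrow> y \<in> spanned \<Longrightarrow> x + y \<in> spanned"
| congr: "x \<in> spanned \<Longrightarrow> x \<approx> y \<Longrightarrow> y \<in> spanned"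

lemma spanned_zero: "0 \<in> spanned"
  using spanned.monomial[of 0 0 0] by simp

lemma spanned_scale: "x \<in> spanned \<Longrightarrow> scale c x \<in> spanned"
proof (induction rule: spanned.induct)
  case (monomial a f b)
  have "scale c (uu ^ a * poly_hud f * dd ^ b) = uu ^ a * poly_hud (smult [:c:] f) * dd ^ b"
    by (simp add: poly_hud_smult poly_h_const)
  thus ?case using spanned.monomial by simp
qed (auto intro: spanned.add spanned.congr congr_scale)

lemma spanned_sum: "(\<And>a. a \<in> A \<Longrightarrow> f a \<in> spanned) \<Longrightarrow> sum f A \<in> spanned"
  by (induction A rule: infinite_finite_induct) (auto intro: spanned.add spanned_zero)

lemma spanned_mult_left:
  assumes "\<And>a f b. m * (uu ^ a * poly_hud f * dd ^ b) \<in> spanned"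
  shows "z \<in> spanned \<Longrightarrow> m * z \<in> spanned"
proof (induction rule: spanned.induct)
  case (add x y) thus ?case by (simp add: distrib_left spanned.add)
qed (auto intro: assms spanned.congr congr_mult_left)

lemma spanned_uu: "z \<in> spanned \<Longrightarrow> uu * z \<in> spanned"
proof (rule spanned_mult_left)
  fix a f b
  have "uu * (uu ^ a * poly_hud f * dd ^ b) = uu ^ Suc a * poly_hud f * dd ^ b"
    by (simp only: power_Suc mult.assoc)
  thus "uu * (uu ^ a * poly_hud f * dd ^ b) \<in> spanned" by (simp only: spanned.monomial)
qed

lemma poly_hud_uu_power: "\<exists>g. poly_hud f * uu ^ a \<approx> uu ^ a * poly_hud g"
proof (induction a arbitrary: f)
  case 0
  show ?case by (intro exI[of _ f]) simp
next
  case (Suc a)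
  obtain f1 where f1: "poly_hud f * uu \<approx> uu * poly_hud f1" by (rule twist)
  obtain g where g: "poly_hud f1 * uu ^ a \<approx> uu ^ a * poly_hud g" using Suc by blast
  have "poly_hud f * uu ^ Suc a = (poly_hud f * uu) * uu ^ a" by (simp add: mult.assoc)
  also have "\<dots> \<approx> uu * (poly_hud f1 * uu ^ a)"
    by (simp add: mult.assoc[symmetric] congr_mult_right f1)
  also have "\<dots> \<approx> uu ^ Suc a * poly_hud g"
    by (simp add: mult.assoc congr_mult_left g)
  finally show ?case by blast
qed

lemma spanned_poly_hud: "z \<in> spanned \<Longrightarrow> poly_hud t * z \<in> spanned"
proof (rule spanned_mult_left)
  fix a f b
  obtain t' where t': "poly_hud t * uu ^ a \<approx> uu ^ a * poly_hud t'"
    using poly_hud_uu_power by blast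
  have "poly_hud t * (uu ^ a * poly_hud f * dd ^ b) = (poly_hud t * uu ^ a) * poly_hud f * dd ^ b"
    by (simp add: mult.assoc)
  also have "\<dots> \<approx> uu ^ a * (poly_hud t' * poly_hud f) * dd ^ b"
    by (simp add: mult.assoc[symmetric] congr_mult_right t')
  also have "\<dots> \<approx> uu ^ a * poly_hud (t' * f) * dd ^ b"
    by (intro congr_mult_right congr_mult_left congr_sym[OF poly_hud_mult])
  finally show "poly_hud t * (uu ^ a * poly_hud f * dd ^ b) \<in> spanned"
    by (rule spanned.congr[OF spanned.monomial congr_sym])
qed

lemma spanned_hh: "z \<in> spanned \<Longrightarrow> hh * z \<in> spanned"
  using spanned_poly_hud[of z "[:[:0, 1:]:]"] by (simp add: poly_hud_x)

text \<open>d is moved to the right through u^a (by du = s ud + phi(h)) and then through f(h,ud).\<close>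
lemma dd_monomial: "dd * (uu ^ a * poly_hud f * dd ^ b) \<in> spanned"
proof (induction a arbitrary: f b)
  case 0
  obtain g where g: "dd * poly_hud f \<approx> poly_hud g * dd" by (rule twist)
  have "dd * (uu ^ 0 * poly_hud f * dd ^ b) = (dd * poly_hud f) * dd ^ b" by (simp add: mult.assoc)
  also have "\<dots> \<approx> uu ^ 0 * poly_hud g * dd ^ Suc b"
    by (simp add: mult.assoc congr_mult_right[OF g, simplified mult.assoc])
  finally show ?case by (rule spanned.congr[OF spanned.monomial congr_sym])
next
  case (Suc a)
  let ?Y = "uu ^ a * poly_hud f * dd ^ b"
  have "dd * (uu ^ Suc a * poly_hud f * dd ^ b) = (dd * uu) * ?Y" by (simp add: mult.assoc)
  also have "\<dots> \<approx> (scale s ud + poly_h \<phi>) * ?Y" by (intro congr_mult_right du_rule)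
  also have "\<dots> = scale s (uu * (dd * ?Y)) + poly_hud [:\<phi>:] * ?Y"
    by (simp add: poly_hud_const algebra_simps)
  finally have e: "dd * (uu ^ Suc a * poly_hud f * dd ^ b) \<approx>
    scale s (uu * (dd * ?Y)) + poly_hud [:\<phi>:] * ?Y" .
  have "scale s (uu * (dd * ?Y)) + poly_hud [:\<phi>:] * ?Y \<in> spanned"
    by (intro spanned.add spanned_scale spanned_uu spanned_poly_hud Suc.IH spanned.monomial)
  thus ?case by (rule spanned.congr[OF _ congr_sym[OF e]])
qed

lemma spanned_dd: "z \<in> spanned \<Longrightarrow> dd * z \<in> spanned"
  by (rule spanned_mult_left[OF dd_monomial])

lemma spanned_word: "word w \<in> spanned"
proof (induction w)
  case Nil
  show ?case using spanned.monomial[of 0 1 0] by (simp add: word_Nil)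
next
  case (Cons g w)
  have "word (g # w) = word [g] * word w" using word_append[of "[g]" w] by simp
  thus ?case using Cons.IH by (cases g) (simp_all add: uu_def dd_def hh_def
      spanned_uu[unfolded uu_def] spanned_dd[unfolded dd_def] spanned_hh[unfolded hh_def])
qed

theorem spanned_all: "z \<in> spanned"
  by (subst falg_expand) (intro spanned_sum spanned_scale spanned_word)


definition in_module :: "(nat \<Rightarrow> complex) \<Rightarrow> bool" where
  "in_module v \<longleftrightarrow> (\<forall>j>n. v j = 0)"

abbreviation act_g :: "gen \<Rightarrow> (nat \<Rightarrow> complex) \<Rightarrow> nat \<Rightarrow> complex" where
  "act_g \<equiv> act_gen r s \<gamma> \<phi> lam n"

abbreviation act_w :: "gen list \<Rightarrow> (nat \<Rightarrow> complex) \<Rightarrow> nat \<Rightarrow> complex" where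
  "act_w \<equiv> act_word r s \<gamma> \<phi> lam n"

definition action :: "falg \<Rightarrow> (nat \<Rightarrow> complex) \<Rightarrow> nat \<Rightarrow> complex" where
  "action z = act r s \<gamma> \<phi> lam n (coeffs z)"

lemma act_w_Nil: "act_w [] v = v"
  by (simp add: act_word_def)

lemma act_w_Cons: "act_w (g # w) v = act_g g (act_w w v)"
  by (simp add: act_word_def)

lemma act_w_append: "act_w (w @ w') v = act_w w (act_w w' v)"
  by (induction w) (simp_all add: act_w_Nil act_w_Cons)

lemma act_w_add: "act_w w (\<lambda>i. v i + v' i) = (\<lambda>j. act_w w v j + act_w w v' j)"
proof (induction w)
  case (Cons g w) thus ?case by (cases g) (auto simp: act_w_Cons act_gen_def algebra_simps)
qed (simp add: act_w_Nil)

lemma act_w_scale: "act_w w (\<lambda>i. c * v i) = (\<lambda>j. c * act_w w v j)"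
proof (induction w)
  case (Cons g w) thus ?case by (cases g) (auto simp: act_w_Cons act_gen_def algebra_simps)
qed (simp add: act_w_Nil)

lemma act_w_zero: "act_w w (\<lambda>i. 0) = (\<lambda>j. 0)"
  using act_w_scale[of w 0] by simp

lemma act_w_sum: "act_w w (\<lambda>i. \<Sum>b\<in>B. F b i) j = (\<Sum>b\<in>B. act_w w (F b) j)"
proof (induction B rule: infinite_finite_induct)
  case (insert x B)
  have "act_w w (\<lambda>i. \<Sum>b\<in>insert x B. F b i) = act_w w (\<lambda>i. F x i + (\<Sum>b\<in>B. F b i))"
    using insert by simp
  thus ?case using insert by (simp add: act_w_add)
qed (simp_all add: act_w_zero)

lemma act_support: "finite T \<Longrightarrow> {w. x w \<noteq> 0} \<subseteq> T \<Longrightarrow>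
    act r s \<gamma> \<phi> lam n x v j = (\<Sum>w\<in>T. x w * act_w w v j)"
  unfolding act_def by (rule sum.mono_neutral_left) auto

lemma action_expand: "action z v j = (\<Sum>w\<in>{w. coeffs z w \<noteq> 0}. coeffs z w * act_w w v j)"
  unfolding action_def act_def by simp

lemma action_add: "action (x + y) v j = action x v j + action y v j"
proof -
  let ?T = "{w. coeffs x w \<noteq> 0} \<union> {w. coeffs y w \<noteq> 0}"
  have T: "finite ?T" by (simp add: finite_support)
  have "action (x + y) v j = (\<Sum>w\<in>?T. coeffs (x + y) w * act_w w v j)"
    unfolding action_def by (rule act_support[OF T]) (auto simp: coeffs_add fa_add_def)
  also have "\<dots> = (\<Sum>w\<in>?T. coeffs x w * act_w w v j) + (\<Sum>w\<in>?T. coeffs y w * act_w w v j)"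
    by (simp add: coeffs_add fa_add_def distrib_right sum.distrib)
  also have "\<dots> = action x v j + action y v j"
    unfolding action_def by (simp add: act_support[OF T])
  finally show ?thesis .
qed

lemma action_scale: "action (scale c x) v j = c * action x v j"
proof -
  let ?T = "{w. coeffs x w \<noteq> 0}"
  have T: "finite ?T" by (simp add: finite_support)
  have "action (scale c x) v j = (\<Sum>w\<in>?T. coeffs (scale c x) w * act_w w v j)"
    unfolding action_def by (rule act_support[OF T]) (auto simp: coeffs_scale fa_smult_def)
  also have "\<dots> = c * action x v j"
    unfolding action_def
    by (simp add: act_support[OF T] coeffs_scale fa_smult_def sum_distrib_left mult.assoc)
  finally show ?thesis .
qed

lemma action_zero: "action 0 v j = 0"
  using action_scale[of 0 0] by simp

lemma action_sum: "action (sum F B) v j = (\<Sum>b\<in>B. action (F b) v j)"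
  by (induction B rule: infinite_finite_induct) (simp_all add: action_zero action_add)

lemma action_diff: "action (x - y) v j = action x v j - action y v j"
  using action_add[of x "- y"] action_scale[of "-1" y] by (simp add: scale_neg)

lemma action_word: "action (word w) v j = act_w w v j"
proof -
  have "action (word w) v j = (\<Sum>w'\<in>{w}. coeffs (word w) w' * act_w w' v j)"
    unfolding action_def by (rule act_support) (auto simp: coeffs_word fa_word_def)
  thus ?thesis by (simp add: coeffs_word fa_word_def)
qed

lemma action_mult: "action (x * y) v j = action x (action y v) j"
proof -
  let ?A = "{w. coeffs x w \<noteq> 0}" and ?B = "{w. coeffs y w \<noteq> 0}"
  have "x * y = (\<Sum>a\<in>?A. scale (coeffs x a) (word a)) * (\<Sum>b\<in>?B. scale (coeffs y b) (word b))"
    using falg_expand[of x] falg_expand[of y] by simp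
  also have "\<dots> = (\<Sum>a\<in>?A. \<Sum>b\<in>?B. scale (coeffs x a * coeffs y b) (word (a @ b)))"
    by (simp add: sum_product mult.commute word_append)
  finally have "action (x * y) v j =
      (\<Sum>a\<in>?A. \<Sum>b\<in>?B. coeffs x a * coeffs y b * act_w (a @ b) v j)"
    by (simp add: action_sum action_scale action_word)
  also have "\<dots> = (\<Sum>a\<in>?A. coeffs x a * act_w a (\<lambda>i. \<Sum>b\<in>?B. coeffs y b * act_w b v i) j)"
    by (simp add: act_w_sum act_w_scale act_w_append sum_distrib_left mult.assoc)
  also have "\<dots> = action x (action y v) j"
    by (simp add: action_expand[of x] action_expand[of y, abs_def])
  finally show ?thesis .
qed

lemma action_mult_fun: "action (x * y) v = action x (action y v)"
  by (rule ext) (rule action_mult)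

lemma action_in_module: "in_module v \<Longrightarrow> in_module (action z v)"
proof -
  have "act_w w v j = 0" if "in_module v" "n < j" for w v j
    using that by (cases w) (auto simp: act_w_Nil act_w_Cons in_module_def act_gen_def
        split: gen.splits)
  thus "in_module v \<Longrightarrow> in_module (action z v)"
    by (auto simp: in_module_def action_expand)
qed

lemma action_uu: "action uu v j = (if 1 \<le> j \<and> j \<le> n then v (j - 1) else 0)"
  by (simp add: uu_def action_word act_w_Cons act_w_Nil act_gen_def)

lemma action_dd: "action dd v j = (if j < n then wbeta (Suc j) * v (Suc j) else 0)"
  by (simp add: dd_def action_word act_w_Cons act_w_Nil act_gen_def)

lemma action_hh: "action hh v j = (if j \<le> n then wlam j * v j else 0)"
  by (simp add: hh_def action_word act_w_Cons act_w_Nil act_gen_def)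

lemma action_one: "action 1 v j = v j"
  using action_word[of "[]"] by (simp add: word_Nil act_w_Nil)

lemma wt_0: "wt r s \<gamma> \<phi> lam 0 = (lam, 0)"
  by (simp add: wt_def)

lemma wt_Suc: "wt r s \<gamma> \<phi> lam (Suc i) = (r * wlam i + \<gamma>, s * wbeta i + poly \<phi> (wlam i))"
  by (simp add: wt_def Phi_def case_prod_beta)

lemma action_poly_h: "in_module v \<Longrightarrow> action (poly_h p) v j = poly p (wlam j) * v j"
proof (induction p arbitrary: j)
  case (pCons a p)
  have "action (poly_h (pCons a p)) v j = a * v j + action hh (action (poly_h p) v) j"
    by (simp add: poly_h_pCons action_add action_scale action_one action_mult)
  thus ?case using pCons by (auto simp: action_hh in_module_def algebra_simps)
qed (simp add: action_zero)

lemma action_ud: "in_module v \<Longrightarrow> action ud v j = wbeta j * v j"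
  by (cases j) (auto simp: action_mult action_uu action_dd in_module_def wt_0)

lemma action_poly_hud: "in_module v \<Longrightarrow> action (poly_hud f) v j = poly2 f (wlam j) (wbeta j) * v j"
proof (induction f arbitrary: v j)
  case (pCons c f)
  have "action (poly_hud (pCons c f)) v j = action (poly_h c) v j + action (poly_hud f) (action ud v) j"
    by (simp add: poly_hud_pCons action_add action_mult)
  thus ?case
    using pCons.IH[OF action_in_module[OF pCons.prems]] action_ud[OF pCons.prems]
    by (simp add: action_poly_h[OF pCons.prems] poly2_pCons algebra_simps)
qed (simp add: action_zero)

lemma action_uu_power:
  "in_module v \<Longrightarrow> action (uu ^ a) v j = (if a \<le> j \<and> j \<le> n then v (j - a) else 0)"
proof (induction a arbitrary: j)
  case (Suc a)
  have "action (uu ^ Suc a) v j = action uu (action (uu ^ a) v) j" by (simp add: action_mult)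
  thus ?case using Suc by (auto simp: action_uu)
qed (simp add: action_one in_module_def)

definition beta_prod :: "nat \<Rightarrow> nat \<Rightarrow> complex" where
  "beta_prod j b = (\<Prod>i<b. wbeta (Suc (j + i)))"

lemma action_dd_power: "in_module v \<Longrightarrow>
    action (dd ^ b) v j = (if j + b \<le> n then beta_prod j b * v (j + b) else 0)"
proof (induction b arbitrary: j)
  case (Suc b)
  have "beta_prod j (Suc b) = wbeta (Suc j) * beta_prod (Suc j) b"
    unfolding beta_prod_def by (subst prod.lessThan_Suc_shift) simp
  moreover have "action (dd ^ Suc b) v j = action dd (action (dd ^ b) v) j"
    by (simp add: action_mult)
  ultimately show ?case using Suc by (auto simp: action_dd)
qed (simp add: action_one in_module_def beta_prod_def)

lemma action_rel_hu: "action rel_hu v j = 0"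
proof -
  have e: "action rel_hu v j =
      action hh (action uu v) j - r * action uu (action hh v) j - \<gamma> * action uu v j"
    by (simp only: rel_hu_def action_diff action_scale action_mult)
  show ?thesis unfolding e by (cases j) (auto simp: action_uu action_hh wt_Suc algebra_simps)
qed

lemma action_rel_dh: "action rel_dh v j = 0"
proof -
  have e: "action rel_dh v j =
      action dd (action hh v) j - r * action hh (action dd v) j - \<gamma> * action dd v j"
    by (simp only: rel_dh_def action_diff action_scale action_mult)
  show ?thesis unfolding e by (cases "j < n") (auto simp: action_dd action_hh wt_Suc algebra_simps)
qed

lemma ideal_annihilates:
  assumes gens_ann: "\<And>g v j. g \<in> gens \<Longrightarrow> in_module v \<Longrightarrow> action (Abs_falg g) v j = 0"
  shows "x \<in> fa_ideal gens \<Longrightarrow> in_module v \<Longrightarrow> act r s \<gamma> \<phi> lam n x v j = 0"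
proof (induction arbitrary: v j rule: fa_ideal.induct)
  case zero thus ?case by (simp add: act_def fa_zero_def)
next
  case (gen g a b)
  have "fa_mul (fa_mul a g) b = coeffs (Abs_falg a * Abs_falg g * Abs_falg b)"
    using gen.hyps gens_finite[OF gen.hyps(1)] by (simp add: coeffs_mul Abs_falg_inverse)
  hence "act r s \<gamma> \<phi> lam n (fa_mul (fa_mul a g) b) v j =
      action (Abs_falg a) (action (Abs_falg g) (action (Abs_falg b) v)) j"
    by (simp add: action_def[symmetric] action_mult_fun)
  also have "action (Abs_falg g) (action (Abs_falg b) v) = (\<lambda>_. 0)"
    using gen.hyps(1) gen.prems by (intro ext gens_ann action_in_module)
  finally show ?case by (simp add: action_expand act_w_zero)
next
  case (add x y)
  have "fa_finite x" "fa_finite y" using add.hyps fa_ideal_finite gens_finite by blast+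
  hence "fa_add x y = coeffs (Abs_falg x + Abs_falg y)" by (simp add: coeffs_add Abs_falg_inverse)
  hence "act r s \<gamma> \<phi> lam n (fa_add x y) v j = action (Abs_falg x) v j + action (Abs_falg y) v j"
    by (simp add: action_def[symmetric] action_add)
  thus ?case using add \<open>fa_finite x\<close> \<open>fa_finite y\<close> by (simp add: action_def Abs_falg_inverse)
qed

end

section \<open>The annihilator under the hypotheses of the theorem\<close>

locale highest_weight = down_up +
  assumes distinct_wt: "\<forall>i\<le>n. \<forall>j\<le>n. i \<noteq> j \<longrightarrow> wt r s \<gamma> \<phi> lam i \<noteq> wt r s \<gamma> \<phi> lam j"
    and beta_nonzero: "\<forall>i. 1 \<le> i \<and> i \<le> n \<longrightarrow> wbeta i \<noteq> 0"
    and beta_end: "wbeta (Suc n) = 0"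
begin

text \<open>du - sud - phi(h) kills v_n precisely because beta_(n+1) = 0.\<close>
lemma action_rel_du: "in_module v \<Longrightarrow> action rel_du v j = 0"
proof -
  assume v: "in_module v"
  have "action rel_du v j = action dd (action uu v) j - s * action ud v j - action (poly_h \<phi>) v j"
    by (simp only: rel_du_def action_diff action_scale action_mult)
  also have "\<dots> = (if j < n then wbeta (Suc j) * v j else 0) - (s * wbeta j + poly \<phi> (wlam j)) * v j"
    using v by (simp add: action_ud action_poly_h action_dd action_uu algebra_simps)
  also have "\<dots> = 0"
  proof (cases "j < n")
    case False
    hence "j = n \<or> v j = 0" using v unfolding in_module_def by (metis nat_neq_iff)
    thus ?thesis using False beta_end by (auto simp: wt_Suc)
  qed (simp add: wt_Suc)
  finally show ?thesis .
qed

definition annihilates :: "falg \<Rightarrow> bool" where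
  "annihilates z \<longleftrightarrow> (\<forall>v j. in_module v \<longrightarrow> action z v j = 0)"

text \<open>Each generator of the ideal acts as zero: the relations by direct computation,
  u^(n+1) and d^(n+1) by degree, and f(h,ud) because f vanishes at all weights.\<close>
lemma gens_annihilate: "g \<in> gens \<Longrightarrow> annihilates (Abs_falg g)"
proof -
  assume "g \<in> gens"
  then obtain z where g: "g = coeffs z" and
    z: "z \<in> {rel_hu, rel_dh, rel_du, uu ^ Suc n, dd ^ Suc n} \<or>
        (\<exists>f. z = poly_hud f \<and> (\<forall>i\<le>n. poly2 f (wlam i) (wbeta i) = 0))"
    by (auto simp: gens_eq)
  have "action z v j = 0" if v: "in_module v" for v j
    using z
  proof (elim disjE exE conjE)
    fix f assume "z = poly_hud f" "\<forall>i\<le>n. poly2 f (wlam i) (wbeta i) = 0"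
    thus "action z v j = 0" using v by (cases "j \<le> n") (auto simp: action_poly_hud in_module_def)
  qed (use v in \<open>auto simp: action_rel_hu action_rel_dh action_rel_du action_uu_power
        action_dd_power simp del: power_Suc\<close>)
  thus ?thesis by (simp add: g coeffs_inverse annihilates_def)
qed

lemma rel_ideal_annihilates: "z \<in> rel_ideal \<Longrightarrow> annihilates z"
  using ideal_annihilates[OF gens_annihilate[unfolded annihilates_def, rule_format]]
  by (auto simp: ideal_of_def annihilates_def action_def)

definition p0 :: "complex poly poly" where
  "p0 = (SOME p. \<forall>i\<le>n. poly2 p (wlam i) (wbeta i) = (if i = 0 then 1 else 0))"

lemma p0_eval: "i \<le> n \<Longrightarrow> poly2 p0 (wlam i) (wbeta i) = (if i = 0 then 1 else 0)"
proof -
  have "\<forall>i\<le>n. poly2 p0 (wlam i) (wbeta i) = (if i = 0 then 1 else 0)"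
    unfolding p0_def by (rule someI_ex[OF bivariate_interpolation[OF distinct_wt]])
  thus "i \<le> n \<Longrightarrow> ?thesis" by simp
qed

definition E0 :: falg where "E0 = poly_hud p0"

text \<open>Decomposition: f(h,ud) = f(lambda_0, 0) E + u g(h,ud) d modulo the ideal.  The
  remainder f - c p0 vanishes at the weight 0 and is interpolated by y g(x,y) at the others,
  where beta_i \<noteq> 0; ud is then moved past g(h,ud).\<close>
lemma decomposition: "\<exists>c g. poly_hud f \<approx> scale c E0 + uu * poly_hud g * dd"
proof -
  define c where "c = poly2 f (wlam 0) (wbeta 0)"
  define rest where "rest i = poly2 f (wlam i) (wbeta i) - c * poly2 p0 (wlam i) (wbeta i)" for i
  obtain g where g: "\<forall>i\<le>n. poly2 g (wlam i) (wbeta i) = rest i / wbeta i"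
    using bivariate_interpolation[OF distinct_wt, where t = "\<lambda>i. rest i / wbeta i"] by blast
  define j where "j = f - smult [:c:] p0 - pCons 0 g"
  have "poly2 j (wlam i) (wbeta i) = 0" if i: "i \<le> n" for i
  proof (cases "i = 0")
    case True thus ?thesis using p0_eval[of 0] by (simp add: j_def poly2_pCons c_def wt_0)
  next
    case False
    hence "wbeta i \<noteq> 0" using beta_nonzero i by simp
    hence "wbeta i * poly2 g (wlam i) (wbeta i) = rest i" using g i by simp
    thus ?thesis by (simp add: j_def poly2_pCons rest_def)
  qed
  hence j: "poly_hud j \<in> rel_ideal" by (intro poly_hud_vanishing) blast
  obtain g' where g': "dd * poly_hud g \<approx> poly_hud g' * dd" by (rule twist)
  have "f = j + smult [:c:] p0 + pCons 0 g" by (simp add: j_def)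
  hence "poly_hud f = poly_hud j + scale c E0 + poly_hud g * ud"
    by (simp add: poly_hud_add poly_hud_smult poly_h_const E0_def poly_hud_pCons)
  also have "\<dots> \<approx> 0 + scale c E0 + ud * poly_hud g"
    by (intro congr_add congr_refl congr_zeroI j congr_sym[OF ud_poly_hud])
  also have "\<dots> = scale c E0 + uu * (dd * poly_hud g)" by (simp add: mult.assoc)
  also have "\<dots> \<approx> scale c E0 + uu * (poly_hud g' * dd)"
    by (intro congr_add congr_refl congr_mult_left g')
  also have "\<dots> = scale c E0 + uu * poly_hud g' * dd" by (simp only: mult.assoc)
  finally show ?thesis by blast
qed

definition normal_form :: "(nat \<Rightarrow> nat \<Rightarrow> complex) \<Rightarrow> falg" where
  "normal_form c = (\<Sum>a\<le>n. \<Sum>b\<le>n. scale (c a b) (uu ^ a * E0 * dd ^ b))"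

lemma normal_form_add: "normal_form c + normal_form c' = normal_form (\<lambda>a b. c a b + c' a b)"
  by (simp add: normal_form_def sum.distrib scale_add_scalar)

lemma normal_form_zero: "normal_form (\<lambda>a b. 0) = 0"
  by (simp add: normal_form_def)

lemma uu_power_big: "n < a \<Longrightarrow> uu ^ a * x \<in> rel_ideal"
proof -
  assume "n < a"
  hence "uu ^ a = uu ^ (Suc n + (a - Suc n))" by simp
  hence "uu ^ a * x = uu ^ Suc n * (uu ^ (a - Suc n) * x)" by (simp only: power_add mult.assoc)
  thus ?thesis by (simp only:) (rule ideal_of_mult_right[OF gens_in_rel_ideal(4)])
qed

lemma dd_power_big: "n < b \<Longrightarrow> x * dd ^ b \<in> rel_ideal"
proof -
  assume "n < b"
  hence "dd ^ b = dd ^ ((b - Suc n) + Suc n)" by simp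
  hence "x * dd ^ b = (x * dd ^ (b - Suc n)) * dd ^ Suc n" by (simp only: power_add mult.assoc)
  thus ?thesis by (simp only:) (rule ideal_of_mult_left[OF gens_in_rel_ideal(5)])
qed

text \<open>A single term u^a E d^b is a normal form: if a or b exceeds n it lies in the ideal.\<close>
lemma normal_term: "\<exists>c. scale c0 (uu ^ a * E0 * dd ^ b) \<approx> normal_form c"
proof (cases "a \<le> n \<and> b \<le> n")
  case True
  let ?c = "\<lambda>a' b'. if a' = a \<and> b' = b then c0 else 0"
  have scale_if: "scale (if P then c0 else 0) x = (if P then scale c0 x else 0)" for P x
    by simp
  have "normal_form ?c =
      (\<Sum>a'\<le>n. if a' = a then (\<Sum>b'\<le>n. if b' = b then scale c0 (uu ^ a' * E0 * dd ^ b') else 0) else 0)"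
    unfolding normal_form_def by (intro sum.cong refl) (auto simp: scale_if)
  also have "\<dots> = scale c0 (uu ^ a * E0 * dd ^ b)" using True by (simp add: scale_if)
  finally show ?thesis by (metis congr_refl)
next
  case False
  have "uu ^ a * E0 * dd ^ b \<in> rel_ideal"
    using False uu_power_big[of a "E0 * dd ^ b"] dd_power_big[of b "uu ^ a * E0"]
    by (auto simp: mult.assoc)
  hence "scale c0 (uu ^ a * E0 * dd ^ b) \<approx> normal_form (\<lambda>a b. 0)"
    by (simp add: normal_form_zero congr_zeroI ideal_of_scale)
  thus ?thesis by blast
qed

lemma monomial_step:
  "\<exists>c0 g. uu ^ a * poly_hud f * dd ^ b \<approx>
      scale c0 (uu ^ a * E0 * dd ^ b) + uu ^ Suc a * poly_hud g * dd ^ Suc b"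
proof -
  obtain c0 g where d: "poly_hud f \<approx> scale c0 E0 + uu * poly_hud g * dd"
    using decomposition by blast
  have "uu ^ a * poly_hud f * dd ^ b \<approx> uu ^ a * (scale c0 E0 + uu * poly_hud g * dd) * dd ^ b"
    by (intro congr_mult_right congr_mult_left d)
  also have "\<dots> = scale c0 (uu ^ a * E0 * dd ^ b) + (uu ^ a * uu) * poly_hud g * (dd * dd ^ b)"
    by (simp add: algebra_simps)
  also have "\<dots> = scale c0 (uu ^ a * E0 * dd ^ b) + uu ^ Suc a * poly_hud g * dd ^ Suc b"
    by (simp only: power_Suc2[of uu] power_Suc[of dd])
  finally show ?thesis by blast
qed

text \<open>Iterating the step pushes the exponent of u past n, where the monomial dies; the
  induction runs on the number k of steps still needed.\<close>
lemma monomial_normal_form: "Suc n \<le> a + k \<Longrightarrow> \<exists>c. uu ^ a * poly_hud f * dd ^ b \<approx> normal_form c"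
proof (induction k arbitrary: a f b)
  case 0
  hence "uu ^ a * poly_hud f * dd ^ b \<in> rel_ideal"
    using uu_power_big[of a "poly_hud f * dd ^ b"] by (simp add: mult.assoc)
  thus ?case using normal_form_zero congr_zeroI by metis
next
  case (Suc k)
  obtain c0 g where step: "uu ^ a * poly_hud f * dd ^ b \<approx>
      scale c0 (uu ^ a * E0 * dd ^ b) + uu ^ Suc a * poly_hud g * dd ^ Suc b"
    using monomial_step by blast
  obtain c1 where c1: "scale c0 (uu ^ a * E0 * dd ^ b) \<approx> normal_form c1"
    using normal_term by blast
  have "Suc n \<le> Suc a + k" using Suc.prems by simp
  then obtain c2 where c2: "uu ^ Suc a * poly_hud g * dd ^ Suc b \<approx> normal_form c2"
    using Suc.IH[of "Suc a" g "Suc b"] by blast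
  have "uu ^ a * poly_hud f * dd ^ b \<approx> normal_form c1 + normal_form c2"
    using step congr_add[OF c1 c2] by (rule congr_trans)
  thus ?case by (auto simp: normal_form_add)
qed

theorem normal_form_exists: "\<exists>c. z \<approx> normal_form c"
  using spanned_all[of z]
proof (induction rule: spanned.induct)
  case (monomial a f b) thus ?case using monomial_normal_form[of a "Suc n"] by simp
next
  case (add x y)
  then obtain c1 c2 where "x \<approx> normal_form c1" "y \<approx> normal_form c2" by blast
  hence "x + y \<approx> normal_form c1 + normal_form c2" by (rule congr_add)
  thus ?case by (auto simp: normal_form_add)
next
  case (congr x y) thus ?case by (meson congr_sym congr_trans)
qed

definition basis_vec :: "nat \<Rightarrow> nat \<Rightarrow> complex" where
  "basis_vec k = (\<lambda>i. if i = k then 1 else 0)"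

lemma basis_vec_in_module: "k \<le> n \<Longrightarrow> in_module (basis_vec k)"
  by (auto simp: in_module_def basis_vec_def)

lemma beta_prod_nonzero: "j + b \<le> n \<Longrightarrow> beta_prod j b \<noteq> 0"
  unfolding beta_prod_def using beta_nonzero by (auto simp: prod_zero_iff)

text \<open>u^a E d^b maps v_b' to beta_1 ... beta_b v_a if b = b', and to 0 otherwise: d^b
  moves v_b' to (a multiple of) v_(b'-b), and E kills every v_i with i \<noteq> 0.\<close>
lemma action_normal_term:
  assumes "a \<le> n" "b \<le> n" "b' \<le> n"
  shows "action (uu ^ a * E0 * dd ^ b) (basis_vec b') j =
    (if j = a \<and> b = b' then beta_prod 0 b else 0)"
proof -
  define v1 where "v1 = action (dd ^ b) (basis_vec b')"
  have m1: "in_module v1" unfolding v1_def by (intro action_in_module basis_vec_in_module assms)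
  have v1: "v1 i = (if i + b = b' then beta_prod i b else 0)" for i
  proof -
    have "v1 i = (if i + b \<le> n then beta_prod i b * basis_vec b' (i + b) else 0)"
      unfolding v1_def by (rule action_dd_power[OF basis_vec_in_module[OF assms(3)]])
    thus ?thesis using assms by (auto simp: basis_vec_def)
  qed
  define v2 where "v2 = action E0 v1"
  have m2: "in_module v2" unfolding v2_def by (intro action_in_module m1)
  have v2: "v2 i = (if i = 0 \<and> b = b' then beta_prod 0 b else 0)" for i
  proof -
    have "v2 i = poly2 p0 (wlam i) (wbeta i) * v1 i"
      unfolding v2_def E0_def by (rule action_poly_hud[OF m1])
    thus ?thesis using assms by (auto simp: v1 p0_eval)
  qed
  have "action (uu ^ a * E0 * dd ^ b) (basis_vec b') j = action (uu ^ a) v2 j"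
    by (simp add: action_mult_fun v1_def v2_def)
  thus ?thesis using assms by (auto simp: action_uu_power[OF m2] v2)
qed

lemma action_normal_form: "a \<le> n \<Longrightarrow> b \<le> n \<Longrightarrow>
    action (normal_form c) (basis_vec b) a = c a b * beta_prod 0 b"
proof -
  assume ab: "a \<le> n" "b \<le> n"
  have "action (normal_form c) (basis_vec b) a =
      (\<Sum>a'\<le>n. \<Sum>b'\<le>n. if a' = a \<and> b' = b then c a b * beta_prod 0 b else 0)"
    unfolding normal_form_def using ab
    by (simp add: action_sum action_scale action_normal_term) (intro sum.cong refl, auto)
  also have "\<dots> = (\<Sum>a'\<le>n. if a' = a then c a b * beta_prod 0 b else 0)"
    using ab by (intro sum.cong refl) auto
  also have "\<dots> = c a b * beta_prod 0 b" using ab by simp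
  finally show ?thesis .
qed

lemma normal_form_faithful: "annihilates (normal_form c) \<Longrightarrow> normal_form c = 0"
proof -
  assume ann: "annihilates (normal_form c)"
  have "c a b = 0" if "a \<le> n" "b \<le> n" for a b
  proof -
    have "c a b * beta_prod 0 b = 0"
      using ann that basis_vec_in_module action_normal_form by (metis annihilates_def)
    thus ?thesis using beta_prod_nonzero[of 0 b] that by simp
  qed
  thus ?thesis by (simp add: normal_form_def)
qed

lemma ideal_subset_ann: "fa_ideal gens \<subseteq> ann_Fhw r s \<gamma> \<phi> lam n"
proof
  fix x assume x: "x \<in> fa_ideal gens"
  have "fa_finite x" using x fa_ideal_finite gens_finite by blast
  moreover have "act r s \<gamma> \<phi> lam n x v = (\<lambda>_. 0)" if "\<forall>j>n. v j = 0" for v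
    using ideal_annihilates[OF gens_annihilate[unfolded annihilates_def, rule_format] x] that
    by (auto simp: in_module_def)
  ultimately show "x \<in> ann_Fhw r s \<gamma> \<phi> lam n" by (simp add: ann_Fhw_def)
qed

text \<open>An annihilating element is congruent to a normal form, which then annihilates as well
  and so vanishes; hence the element lies in the ideal.\<close>
lemma ann_subset_ideal: "ann_Fhw r s \<gamma> \<phi> lam n \<subseteq> fa_ideal gens"
proof
  fix x assume x: "x \<in> ann_Fhw r s \<gamma> \<phi> lam n"
  define z where "z = Abs_falg x"
  have z: "coeffs z = x" using x by (simp add: z_def ann_Fhw_def Abs_falg_inverse)
  have "annihilates z"
    using x by (auto simp: annihilates_def action_def z ann_Fhw_def in_module_def)
  obtain c where c: "z \<approx> normal_form c" using normal_form_exists by blast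
  hence "annihilates (z - normal_form c)" by (simp add: congr_def rel_ideal_annihilates)
  hence "annihilates (normal_form c)"
    using \<open>annihilates z\<close> by (simp add: annihilates_def action_diff)
  hence "normal_form c = 0" by (rule normal_form_faithful)
  hence "z \<in> rel_ideal" using c by (simp add: congr_def)
  thus "x \<in> fa_ideal gens" by (simp add: ideal_of_def z)
qed

end

theorem mainTheorem1:
  fixes r s \<gamma> lam :: complex and \<phi> :: "complex poly" and n :: nat
  assumes "r \<noteq> 0" and "s \<noteq> 0"
    and "\<forall>i\<le>n. \<forall>j\<le>n. i \<noteq> j \<longrightarrow> wt r s \<gamma> \<phi> lam i \<noteq> wt r s \<gamma> \<phi> lam j"
    and "\<forall>i. 1 \<le> i \<and> i \<le> n \<longrightarrow> snd (wt r s \<gamma> \<phi> lam i) \<noteq> 0"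
    and "snd (wt r s \<gamma> \<phi> lam (Suc n)) = 0"
  shows "ann_Fhw r s \<gamma> \<phi> lam n =
    fa_ideal (dua_rels r s \<gamma> \<phi> \<union>
              {fa_word (replicate (Suc n) U), fa_word (replicate (Suc n) D)} \<union>
              {fa_biv f | f. \<forall>i\<le>n. poly2 f (fst (wt r s \<gamma> \<phi> lam i)) (snd (wt r s \<gamma> \<phi> lam i)) = 0})"
proof -
  interpret highest_weight r s \<gamma> \<phi> lam n
    using assms(3-5) by unfold_locales
  show ?thesis
    using ideal_subset_ann ann_subset_ideal unfolding gens_def by blast
qed

end
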